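(* Let $C\in\mathcal C_n$, $A=\Xi^{-1}(C)$ and $L_{ij}=\sum_{k=1}^n kA_{i,j,k}$ for $i,j\in[n]$. Then the length $r(C)$ of any maximal chain in $(\mathcal C_n,\preceq)$ from the minimum element to $C$ equals $$r(C)=\frac{-11n^5+20n^4+10n^3-20n^2+4^{1+(-1)^n}n}{480}+\frac12\sum_{1\le i,j\le n}(i-j)^2(n-L_{ij}).$$
   Context: Let $[n]=\{1,\dots,n\}$, $[0,n]=\{0,\dots,n\}$. A corner-sum hypermatrix of order $n$ is an integer array $C=(C_{i,j,k})_{i,j,k\in[0,n]}$ such that for all $i,j\in[0,n]$: $C_{i,j,0}=C_{i,0,j}=C_{0,i,j}=0$, $C_{i,j,n}=C_{i,n,j}=C_{n,i,j}=ij$, and for all $k\in[n]$ each of $C_{i,j,k}-C_{i,j,k-1}$, $C_{i,k,j}-C_{i,k-1,j}$, $C_{k,i,j}-C_{k-1,i,j}$ is an integer in $\{\max(0,i+j-n),\dots,\min(i,j)\}$. $\mathcal C_n$ is the set of these, ordered by $C\preceq D$ iff $C\ge D$ entrywise; it is a finite distributive lattice with a minimum element. For an array $C$ indexed by $[0,n]^3$, $\Xi^{-1}(C)$ is the array indexed by $[n]^3$ with $\Xi^{-1}(C)_{i,j,k}=C_{i,j,k}-C_{i-1,j,k}-C_{i,j-1,k}-C_{i,j,k-1}+C_{i-1,j-1,k}+C_{i-1,j,k-1}+C_{i,j-1,k-1}-C_{i-1,j-1,k-1}$. *)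

theory Defs
  imports Complex_Main
begin

type_synonym hmat = "nat \<Rightarrow> nat \<Rightarrow> nat \<Rightarrow> int"

definition step_ok :: "nat \<Rightarrow> nat \<Rightarrow> nat \<Rightarrow> int \<Rightarrow> bool" where
  "step_ok n i j d \<longleftrightarrow> max 0 (int i + int j - int n) \<le> d \<and> d \<le> int (min i j)"

(* corner-sum hypermatrices of order n; arrays are indexed by [0,n]^3 and
   (to have a canonical representative) are required to vanish outside *)
definition CSH :: "nat \<Rightarrow> hmat set" where
  "CSH n = {C.
     (\<forall>i j k. (n < i \<or> n < j \<or> n < k) \<longrightarrow> C i j k = 0) \<and>
     (\<forall>i\<le>n. \<forall>j\<le>n.
        C i j 0 = 0 \<and> C i 0 j = 0 \<and> C 0 i j = 0 \<and>
        C i j n = int (i*j) \<and> C i n j = int (i*j) \<and> C n i j = int (i*j) \<and>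
        (\<forall>k\<in>{1..n}.
           step_ok n i j (C i j k - C i j (k-1)) \<and>
           step_ok n i j (C i k j - C i (k-1) j) \<and>
           step_ok n i j (C k i j - C (k-1) i j)))}"

definition csh_le :: "nat \<Rightarrow> hmat \<Rightarrow> hmat \<Rightarrow> bool" where
  "csh_le n C D \<longleftrightarrow> (\<forall>i\<le>n. \<forall>j\<le>n. \<forall>k\<le>n. D i j k \<le> C i j k)"

definition is_chain :: "nat \<Rightarrow> hmat set \<Rightarrow> bool" where
  "is_chain n S \<longleftrightarrow> (\<forall>x\<in>S. \<forall>y\<in>S. csh_le n x y \<or> csh_le n y x)"

(* maximal chains in the interval [min, C] of (CSH n, \<preceq>); since the minimum is
   below everything, this interval is {D \<in> CSH n. D \<preceq> C} *)
definition maximal_chain_to :: "nat \<Rightarrow> hmat \<Rightarrow> hmat set \<Rightarrow> bool" where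
  "maximal_chain_to n C S \<longleftrightarrow>
     (let I = {D \<in> CSH n. csh_le n D C} in
       S \<subseteq> I \<and> is_chain n S \<and> \<not> (\<exists>T. T \<subseteq> I \<and> is_chain n T \<and> S \<subset> T))"

definition Xi_inv :: "hmat \<Rightarrow> hmat" where
  "Xi_inv C i j k = C i j k - C (i-1) j k - C i (j-1) k - C i j (k-1)
      + C (i-1) (j-1) k + C (i-1) j (k-1) + C i (j-1) (k-1) - C (i-1) (j-1) (k-1)"

end

theory Submission
  imports Defs
begin

(*
  Entrywise, the minimum of C_n is the largest corner-sum hypermatrix csh_min n: each entry is
  the least of the four upper bounds ij, jk, ki and ij - (n - k)(i + j - n) that the increment
  constraints force. Let Phi(C) be the sum of the interior entries of C. If C <= D entrywise and
  C ~= D, then adding 1 to C at an interior position with C < D that minimises n C_ijk - ijk gives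
  again a corner-sum hypermatrix below D, and Phi grows by exactly 1. Hence along a maximal chain
  Phi takes every value in [Phi(C), Phi(csh_min n)] exactly once, so r(C) = Phi(csh_min n) - Phi(C).
  Summation by parts, first in k and then in (i, j), turns the sum of (i - j)^2 (n - L_ij) into
  n^2 (n - 1)^2 (2n - 1)/6 - 2 Phi(C). Finally Phi(csh_min n) is evaluated by summing along
  antidiagonals, whose sums satisfy two-step recurrences; this is where the parity term comes from.
*)

lemma sum_lessThan_eq_Ico_1:
  fixes g :: "nat \<Rightarrow> 'a::comm_monoid_add"
  assumes "g 0 = 0"
  shows "(\<Sum>i<n. g i) = (\<Sum>i\<in>{1..<n}. g i)"
  using assms by (cases n) (simp_all add: lessThan_atLeast0 sum.atLeast_Suc_lessThan)

lemma sum_Icc_0_eq_Ico_1: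
  fixes h :: "nat \<Rightarrow> int"
  assumes "h 0 = 0" "h n = 0"
  shows "(\<Sum>i\<in>{0..n}. h i) = (\<Sum>i\<in>{1..<n}. h i)"
  using assms by (cases n) (simp_all add: atLeast0_atMost_Suc_eq_insert_0 atLeastLessThanSuc_atLeastAtMost
      sum.atLeast_Suc_atMost)

lemma double_sum_Ico_1_int: "2 * (\<Sum>i\<in>{1..<m}. int i) = int m * (int m - 1)"
  by (induction m) (auto simp: algebra_simps atLeastLessThanSuc not_less_eq_eq)

lemma six_sum_squares_int: "6 * (\<Sum>i\<in>{1..n}. int i ^ 2) = int n * (int n + 1) * (2 * int n + 1)"
  by (induction n) (simp_all add: algebra_simps power2_eq_square)

lemma sum_min_square: "6 * (\<Sum>i<n. \<Sum>j<n. int (min i j)) = (int n - 1) * int n * (2 * int n - 1)"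
proof (induction n)
  case (Suc n)
  have "(\<Sum>j<n. int (min n j)) = (\<Sum>j<n. int j)" "(\<Sum>i<n. int (min i n)) = (\<Sum>j<n. int j)"
    by (auto intro: sum.cong)
  moreover have "2 * (\<Sum>j<n. int j) = int n * (int n - 1)"
    by (induction n) (auto simp: algebra_simps)
  ultimately show ?case
    using Suc.IH by (simp add: sum.distrib algebra_simps)
qed simp

lemma sum_ramp:
  "c \<le> m \<Longrightarrow> 2 * (\<Sum>k\<in>{1..m}. max 0 (int k - int c)) = int (m - c) * int (m - c + 1)"
proof (induction m)
  case (Suc m)
  show ?case
  proof (cases "c \<le> m")
    case True
    then show ?thesis
      using Suc.IH by (simp add: Suc_diff_le algebra_simps)
  next
    case False
    then have "c = Suc m"
      using Suc.prems by simp
    then show ?thesis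
      by (simp add: sum.neutral)
  qed
qed simp

lemma sum_square_symmetric:
  fixes g :: "nat \<Rightarrow> nat \<Rightarrow> int"
  assumes sym: "\<And>i j. g i j = g j i"
  shows "(\<Sum>i\<in>{0..N}. \<Sum>j\<in>{0..N}. g i j) = (\<Sum>p\<in>{0..N}. g p p) + 2 * (\<Sum>p\<in>{0..N}. \<Sum>q\<in>{Suc p..N}. g p q)"
proof (induction N)
  case (Suc N)
  have "(\<Sum>q\<in>{Suc p..Suc N}. g p q) = (\<Sum>q\<in>{Suc p..N}. g p q) + g p (Suc N)" if "p \<le> N" for p
    using that by (simp add: atLeastAtMostSuc_conv)
  then have "(\<Sum>p\<in>{0..Suc N}. \<Sum>q\<in>{Suc p..Suc N}. g p q)
      = (\<Sum>p\<in>{0..N}. \<Sum>q\<in>{Suc p..N}. g p q) + (\<Sum>p\<in>{0..N}. g p (Suc N))"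
    by (simp add: sum.distrib)
  moreover have "(\<Sum>j\<in>{0..N}. g (Suc N) j) = (\<Sum>p\<in>{0..N}. g p (Suc N))"
    using sym by simp
  ultimately show ?case
    using Suc.IH by (simp add: sum.distrib)
qed simp

lemma int_set_eq_interval:
  fixes T :: "int set"
  assumes "finite T" "lo \<in> T" "hi \<in> T" "T \<subseteq> {lo..hi}"
    and consecutive: "\<And>a b. a \<in> T \<Longrightarrow> b \<in> T \<Longrightarrow> a < b \<Longrightarrow>
      \<forall>t\<in>T. t \<le> a \<or> b \<le> t \<Longrightarrow> b = a + 1"
  shows "T = {lo..hi}"
proof
  show "{lo..hi} \<subseteq> T"
  proof
    fix v
    assume v: "v \<in> {lo..hi}"
    show "v \<in> T"
    proof (rule ccontr)
      assume "v \<notin> T"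
      define a where "a = Max {t \<in> T. t < v}"
      define b where "b = Min {t \<in> T. v < t}"
      have "lo \<in> {t \<in> T. t < v}" "hi \<in> {t \<in> T. v < t}"
        using assms(2,3) v \<open>v \<notin> T\<close> by (auto simp: order_le_less)
      then have "a \<in> {t \<in> T. t < v}" "b \<in> {t \<in> T. v < t}"
        unfolding a_def b_def using \<open>finite T\<close> by (intro Max_in Min_in; auto)+
      moreover have "\<forall>t\<in>T. t \<le> a \<or> b \<le> t"
      proof
        fix t
        assume "t \<in> T"
        with \<open>v \<notin> T\<close> have "t < v \<or> v < t"
          by (metis neq_iff)
        then show "t \<le> a \<or> b \<le> t"
          unfolding a_def b_def using \<open>finite T\<close> \<open>t \<in> T\<close> by (auto intro: Max_ge Min_le)
      qed
      ultimately show False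
        using consecutive[of a b] by auto
    qed
  qed
qed (use assms in simp)

lemma sum_index_mult_diff:
  fixes m :: nat and h :: "nat \<Rightarrow> int"
  shows "(\<Sum>j\<in>{1..m}. int j * (h j - h (j - 1))) = int m * h m - (\<Sum>j<m. h j)"
  by (induction m) (auto simp: algebra_simps)

lemma sum_index_mult_mixed_diff:
  fixes f :: "nat \<Rightarrow> nat \<Rightarrow> int"
  shows "(\<Sum>i\<in>{1..n}. \<Sum>j\<in>{1..n}. int i * int j * (f i j - f (i - 1) j - f i (j - 1) + f (i - 1) (j - 1)))
    = int n * (int n * f n n - (\<Sum>i<n. f i n)) - (\<Sum>j<n. int n * f n j - (\<Sum>i<n. f i j))"
proof -
  have row: "(\<Sum>j\<in>{1..n}. int j * (f i j - f (i - 1) j - f i (j - 1) + f (i - 1) (j - 1)))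
      = int n * (f i n - f (i - 1) n) - (\<Sum>j<n. f i j - f (i - 1) j)" for i
    using sum_index_mult_diff[where m = n and h = "\<lambda>j. f i j - f (i - 1) j"] by (simp add: algebra_simps)
  have "(\<Sum>i\<in>{1..n}. \<Sum>j\<in>{1..n}. int i * int j * (f i j - f (i - 1) j - f i (j - 1) + f (i - 1) (j - 1)))
      = (\<Sum>i\<in>{1..n}. int i * (int n * (f i n - f (i - 1) n) - (\<Sum>j<n. f i j - f (i - 1) j)))"
    by (simp only: mult.assoc sum_distrib_left[symmetric] row)
  also have "\<dots> = int n * (\<Sum>i\<in>{1..n}. int i * (f i n - f (i - 1) n))
        - (\<Sum>j<n. \<Sum>i\<in>{1..n}. int i * (f i j - f (i - 1) j))"
    by (simp add: right_diff_distrib sum_subtractf sum_distrib_left mult.left_commute)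
      (simp add: sum.swap[of _ _ "{..<n}"])
  finally show ?thesis
    by (simp only: sum_index_mult_diff[where m = n and h = "\<lambda>i. f i j" for j])
qed

lemma sum_mixed_diff_telescope:
  fixes f :: "nat \<Rightarrow> nat \<Rightarrow> int"
  shows "(\<Sum>j\<in>{1..n}. f i j - f (i - 1) j - f i (j - 1) + f (i - 1) (j - 1))
    = f i n - f (i - 1) n - f i 0 + f (i - 1) 0"
  using sum_telescope''[of 0 n "\<lambda>j. f i j - f (i - 1) j"] by (simp add: algebra_simps)

lemma sum_index_mult_mixed_diff_boundary:
  fixes f :: "nat \<Rightarrow> nat \<Rightarrow> int"
  assumes zero_left: "\<And>a. a \<le> n \<Longrightarrow> f a 0 = 0" and zero_right: "\<And>b. b \<le> n \<Longrightarrow> f 0 b = 0"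
    and top_left: "\<And>a. a \<le> n \<Longrightarrow> f a n = int a * K" and top_right: "\<And>b. b \<le> n \<Longrightarrow> f n b = int b * K"
  shows "(\<Sum>i\<in>{1..n}. \<Sum>j\<in>{1..n}. int i * int j * (f i j - f (i - 1) j - f i (j - 1) + f (i - 1) (j - 1)))
    = int n ^ 2 * K + (\<Sum>i\<in>{1..<n}. \<Sum>j\<in>{1..<n}. f i j)"
proof -
  have interior: "(\<Sum>j<n. \<Sum>i<n. f i j) = (\<Sum>i\<in>{1..<n}. \<Sum>j\<in>{1..<n}. f i j)"
    by (subst sum.swap) (simp add: sum_lessThan_eq_Ico_1 zero_left zero_right)
  have edge: "(\<Sum>i<n. f i n) = K * (\<Sum>i\<in>{1..<n}. int i)" "(\<Sum>j<n. f n j) = K * (\<Sum>i\<in>{1..<n}. int i)"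
    by (simp_all add: top_left top_right sum_lessThan_eq_Ico_1 sum_distrib_left mult.commute)
  have "(\<Sum>i\<in>{1..n}. \<Sum>j\<in>{1..n}. int i * int j * (f i j - f (i - 1) j - f i (j - 1) + f (i - 1) (j - 1)))
      = int n * (int n * (int n * K) - (\<Sum>i<n. f i n)) - (int n * (\<Sum>j<n. f n j) - (\<Sum>j<n. \<Sum>i<n. f i j))"
    unfolding sum_index_mult_mixed_diff by (simp add: top_left sum_subtractf sum_distrib_left)
  also have "\<dots> = int n ^ 2 * K + (\<Sum>i\<in>{1..<n}. \<Sum>j\<in>{1..<n}. f i j)"
    unfolding edge interior using arg_cong[OF double_sum_Ico_1_int[of n], of "\<lambda>x. K * int n * x"]
    by (simp add: algebra_simps power2_eq_square)
  finally show ?thesis .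
qed

lemma sum_sq_diff_mixed_diff:
  fixes f :: "nat \<Rightarrow> nat \<Rightarrow> int"
  assumes zero_left: "\<And>a. a \<le> n \<Longrightarrow> f a 0 = 0" and zero_right: "\<And>b. b \<le> n \<Longrightarrow> f 0 b = 0"
    and top_left: "\<And>a. a \<le> n \<Longrightarrow> f a n = int a * K" and top_right: "\<And>b. b \<le> n \<Longrightarrow> f n b = int b * K"
  shows "(\<Sum>i\<in>{1..n}. \<Sum>j\<in>{1..n}. (int i - int j)^2 * (f i j - f (i - 1) j - f i (j - 1) + f (i - 1) (j - 1)))
     = 2 * K * (\<Sum>i\<in>{1..n}. int i ^ 2) - 2 * int n ^ 2 * K - 2 * (\<Sum>i\<in>{1..<n}. \<Sum>j\<in>{1..<n}. f i j)"
proof -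
  define B where "B i j = f i j - f (i - 1) j - f i (j - 1) + f (i - 1) (j - 1)" for i j
  have row: "(\<Sum>j\<in>{1..n}. B i j) = K" if "i \<in> {1..n}" for i
  proof -
    have "f i 0 = 0" "f (i - 1) 0 = 0" "f i n - f (i - 1) n = K"
      using that by (auto simp: zero_left top_left of_nat_diff algebra_simps)
    then show ?thesis
      unfolding B_def sum_mixed_diff_telescope by simp
  qed
  have col: "(\<Sum>i\<in>{1..n}. B i j) = K" if "j \<in> {1..n}" for j
  proof -
    have "f 0 j = 0" "f 0 (j - 1) = 0" "f n j - f n (j - 1) = K"
      using that by (auto simp: zero_right top_right of_nat_diff algebra_simps)
    moreover have "B i j = f i j - f i (j - 1) - f (i - 1) j + f (i - 1) (j - 1)" for i
      by (simp add: B_def)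
    ultimately show ?thesis
      using sum_mixed_diff_telescope[of "\<lambda>a b. f b a" j n] by simp
  qed
  have "(\<Sum>i\<in>{1..n}. \<Sum>j\<in>{1..n}. (int i ^ 2 + int j ^ 2) * B i j)
      = (\<Sum>i\<in>{1..n}. int i ^ 2 * (\<Sum>j\<in>{1..n}. B i j)) + (\<Sum>j\<in>{1..n}. int j ^ 2 * (\<Sum>i\<in>{1..n}. B i j))"
    by (simp add: distrib_right sum.distrib sum_distrib_left sum.swap[of "\<lambda>i j. int j ^ 2 * B i j"])
  also have "\<dots> = (\<Sum>i\<in>{1..n}. int i ^ 2 * K) + (\<Sum>j\<in>{1..n}. int j ^ 2 * K)"
    by (intro arg_cong2[where f = "(+)"] sum.cong refl) (simp_all only: row col)
  finally have squares: "(\<Sum>i\<in>{1..n}. \<Sum>j\<in>{1..n}. (int i ^ 2 + int j ^ 2) * B i j)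
      = 2 * K * (\<Sum>i\<in>{1..n}. int i ^ 2)"
    by (simp flip: sum_distrib_right)
  have products: "(\<Sum>i\<in>{1..n}. \<Sum>j\<in>{1..n}. int i * int j * B i j)
      = int n ^ 2 * K + (\<Sum>i\<in>{1..<n}. \<Sum>j\<in>{1..<n}. f i j)"
    unfolding B_def using assms by (rule sum_index_mult_mixed_diff_boundary)
  have "(int i - int j)^2 * B i j = (int i ^ 2 + int j ^ 2) * B i j - 2 * (int i * int j * B i j)" for i j
    by (simp add: algebra_simps power2_eq_square)
  then have "(\<Sum>i\<in>{1..n}. \<Sum>j\<in>{1..n}. (int i - int j)^2 * B i j)
      = (\<Sum>i\<in>{1..n}. \<Sum>j\<in>{1..n}. (int i ^ 2 + int j ^ 2) * B i j)
        - 2 * (\<Sum>i\<in>{1..n}. \<Sum>j\<in>{1..n}. int i * int j * B i j)"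
    by (simp add: sum_subtractf sum_distrib_left)
  then show ?thesis
    unfolding squares products B_def[symmetric] by (simp add: algebra_simps)
qed

lemma CSH_outside: "C \<in> CSH n \<Longrightarrow> n < i \<or> n < j \<or> n < k \<Longrightarrow> C i j k = 0"
  unfolding CSH_def by auto

lemma CSH_zero_faces:
  "C \<in> CSH n \<Longrightarrow> i \<le> n \<Longrightarrow> j \<le> n \<Longrightarrow> C i j 0 = 0 \<and> C i 0 j = 0 \<and> C 0 i j = 0"
  unfolding CSH_def by auto

lemma CSH_top_faces:
  "C \<in> CSH n \<Longrightarrow> i \<le> n \<Longrightarrow> j \<le> n \<Longrightarrow>
    C i j n = int (i * j) \<and> C i n j = int (i * j) \<and> C n i j = int (i * j)"
  unfolding CSH_def by auto

lemma CSH_steps: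
  "C \<in> CSH n \<Longrightarrow> i \<le> n \<Longrightarrow> j \<le> n \<Longrightarrow> k \<in> {1..n} \<Longrightarrow>
    step_ok n i j (C i j k - C i j (k - 1)) \<and> step_ok n i j (C i k j - C i (k - 1) j) \<and>
    step_ok n i j (C k i j - C (k - 1) i j)"
  unfolding CSH_def by auto

lemma CSH_eqI:
  assumes "C \<in> CSH n" "D \<in> CSH n"
    and "\<And>i j k. i \<le> n \<Longrightarrow> j \<le> n \<Longrightarrow> k \<le> n \<Longrightarrow> C i j k = D i j k"
  shows "C = D"
proof (intro ext)
  fix i j k
  show "C i j k = D i j k"
    using assms CSH_outside[OF assms(1)] CSH_outside[OF assms(2)] by (metis not_le)
qed

lemma CSH_differ_interior:
  assumes "C \<in> CSH n" "D \<in> CSH n" "i \<le> n" "j \<le> n" "k \<le> n" "C i j k \<noteq> D i j k"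
  shows "i \<in> {1..<n} \<and> j \<in> {1..<n} \<and> k \<in> {1..<n}"
  using assms CSH_zero_faces[OF assms(1)] CSH_zero_faces[OF assms(2)]
    CSH_top_faces[OF assms(1)] CSH_top_faces[OF assms(2)]
  by (cases "i = 0 \<or> j = 0 \<or> k = 0 \<or> i = n \<or> j = n \<or> k = n") (auto simp: le_less)

lemma increments_sum_bounds:
  fixes g :: "nat \<Rightarrow> int"
  assumes "\<And>k. k \<in> {1..n} \<Longrightarrow> lo \<le> g k - g (k - 1) \<and> g k - g (k - 1) \<le> hi"
    and "a \<le> b" "b \<le> n"
  shows "int (b - a) * lo \<le> g b - g a \<and> g b - g a \<le> int (b - a) * hi"
  using assms(2,3)
proof (induction b)
  case (Suc b)
  show ?case
  proof (cases "a \<le> b")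
    case True
    then show ?thesis
      using Suc assms(1)[of "Suc b"] by (simp add: Suc_diff_le algebra_simps)
  qed (use Suc in \<open>simp add: le_Suc_eq\<close>)
qed simp

lemma step_ok_sum_bounds:
  assumes "\<And>t. t \<in> {1..n} \<Longrightarrow> step_ok n p q (g t - g (t - 1))" "a \<le> b" "b \<le> n"
  shows "int (b - a) * max 0 (int p + int q - int n) \<le> g b - g a \<and> g b - g a \<le> int (b - a) * int (min p q)"
  using increments_sum_bounds[OF _ assms(2,3)] assms(1) unfolding step_ok_def by blast

lemma csh_le_refl: "csh_le n C C"
  unfolding csh_le_def by simp

lemma csh_le_trans: "csh_le n C D \<Longrightarrow> csh_le n D E \<Longrightarrow> csh_le n C E"
  unfolding csh_le_def by (meson order.trans)

lemma csh_le_antisym: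
  "C \<in> CSH n \<Longrightarrow> D \<in> CSH n \<Longrightarrow> csh_le n C D \<Longrightarrow> csh_le n D C \<Longrightarrow> C = D"
  unfolding csh_le_def by (rule CSH_eqI) (auto intro: order.antisym)

section \<open>The minimum element\<close>

lemma min4_piecewise:
  fixes I J K N :: int
  assumes "0 \<le> I" "I \<le> J" "J \<le> N" "0 \<le> K" "K \<le> N"
  shows "min (min (I * J) (J * K)) (min (K * I) (I * J + J * K + K * I - N * (I + J + K) + N ^ 2))
       = K * I - max 0 (K + max I (N - J) - N) * min I (N - J)"
proof -
  define T where "T = I * J + J * K + K * I - N * (I + J + K) + N ^ 2"
  have T_IJ: "T - I * J = (N - K) * (N - I - J)" and T_KI: "T - K * I = (N - J) * (N - I - K)"
    unfolding T_def by (simp_all add: algebra_simps power2_eq_square)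
  have KI_JK: "K * I \<le> J * K"
    using assms by (simp add: mult.commute mult_right_mono)
  have IJ_T: "I + J \<le> N \<Longrightarrow> I * J \<le> T" and T_IJ': "N < I + J \<Longrightarrow> T \<le> I * J"
    using T_IJ mult_nonneg_nonneg[of "N - K" "N - I - J"] mult_nonneg_nonpos[of "N - K" "N - I - J"] assms
    by linarith+
  have KI_T: "K + I \<le> N \<Longrightarrow> K * I \<le> T" and T_KI': "N < K + I \<Longrightarrow> T \<le> K * I"
    using T_KI mult_nonneg_nonneg[of "N - J" "N - I - K"] mult_nonneg_nonpos[of "N - J" "N - I - K"] assms
    by linarith+
  have KI_IJ: "K \<le> J \<Longrightarrow> K * I \<le> I * J" and IJ_KI: "J \<le> K \<Longrightarrow> I * J \<le> K * I"
    using assms by (simp_all add: mult.commute mult_left_mono)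
  consider "I + J \<le> N" "K \<le> J" | "I + J \<le> N" "J < K" | "N < I + J" "K + I \<le> N" | "N < I + J" "N < K + I"
    by linarith
  then show ?thesis
  proof cases
    case 1
    then show ?thesis using KI_JK KI_IJ IJ_T unfolding T_def[symmetric] by (simp add: min_def max_def)
  next
    case 2
    moreover have "K * I - (K - J) * I = I * J" by (simp add: algebra_simps)
    ultimately show ?thesis using KI_JK IJ_KI IJ_T unfolding T_def[symmetric] by (simp add: min_def max_def)
  next
    case 3
    then have "K * I \<le> I * J" using KI_IJ by simp
    then have "min (min (I * J) (J * K)) (min (K * I) T) = K * I" using KI_JK KI_T 3 by (simp add: min_def)
    moreover have "max 0 (K + max I (N - J) - N) = 0" using 3 by simp
    ultimately show ?thesis unfolding T_def[symmetric] by simp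
  next
    case 4
    moreover have "K * I - (K + I - N) * (N - J) = T" using T_KI by (simp add: algebra_simps)
    ultimately show ?thesis using KI_JK T_KI' T_IJ' unfolding T_def[symmetric] by (simp add: min_def max_def)
  qed
qed

(* The order of C_n is reverse entrywise, so its minimum is the entrywise largest element;
   the four terms are the upper bounds of CSH_bounds. *)
definition csh_min :: "nat \<Rightarrow> hmat" where
  "csh_min n i j k = (if i \<le> n \<and> j \<le> n \<and> k \<le> n then
     min (min (int i * int j) (int j * int k))
         (min (int k * int i) (int i * int j + int j * int k + int k * int i - int n * (int i + int j + int k) + int n ^ 2))
     else 0)"

lemma csh_min_swap12: "csh_min n i j k = csh_min n j i k"
  unfolding csh_min_def by (auto simp: algebra_simps min.commute min.left_commute)

lemma csh_min_swap23: "csh_min n i j k = csh_min n i k j"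
  unfolding csh_min_def by (auto simp: algebra_simps min.commute min.left_commute)

lemma csh_min_piecewise:
  assumes "i \<le> n" "j \<le> n" "k \<le> n"
  shows "csh_min n i j k = int k * int (min i j)
     - max 0 (int k + int (max (min i j) (n - max i j)) - int n) * int (min (min i j) (n - max i j))"
proof -
  have *: "csh_min n i j k = int k * int (min i j)
     - max 0 (int k + int (max (min i j) (n - max i j)) - int n) * int (min (min i j) (n - max i j))"
    if "i \<le> j" "j \<le> n" for i j
  proof -
    have "int (max i (n - j)) = max (int i) (int n - int j)" "int (min i (n - j)) = min (int i) (int n - int j)"
      using that by auto
    then show ?thesis
      using min4_piecewise[of "int i" "int j" "int n" "int k"] that assms(3)
      by (simp add: csh_min_def min_def max_def)
  qed
  show ?thesis
    using *[of i j] *[of j i] assms csh_min_swap12[of n i j k] by (cases "i \<le> j") (auto simp: min_def max_def)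
qed

lemma csh_min_increment:
  assumes "i \<le> n" "j \<le> n" "k \<in> {1..n}"
  shows "step_ok n i j (csh_min n i j k - csh_min n i j (k - 1))"
proof -
  define P where "P = int (min i j)"
  define U where "U = int (max (min i j) (n - max i j))"
  define L where "L = int (min (min i j) (n - max i j))"
  obtain k' where k': "k = Suc k'" using assms(3) by (cases k) auto
  have top: "csh_min n i j k = int k * P - max 0 (int k + U - int n) * L"
    unfolding P_def U_def L_def by (rule csh_min_piecewise) (use assms in auto)
  have below: "csh_min n i j (k - 1) = int k' * P - max 0 (int k' + U - int n) * L"
    unfolding P_def U_def L_def k' diff_Suc_1 by (rule csh_min_piecewise) (use assms k' in auto)
  have "max 0 (int k + U - int n) = max 0 (int k' + U - int n) + (if 1 \<le> int k + U - int n then 1 else 0)"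
    unfolding k' by (simp add: max_def)
  then have "csh_min n i j k - csh_min n i j (k - 1) = P - (if 1 \<le> int k + U - int n then L else 0)"
    unfolding top below by (simp add: k' algebra_simps)
  moreover have "P - L = max 0 (int i + int j - int n)" "0 \<le> L" "max 0 (int i + int j - int n) \<le> P"
    unfolding P_def L_def using assms by (auto simp: min_def max_def)
  ultimately show ?thesis
    unfolding step_ok_def P_def[symmetric] by auto
qed

lemma csh_min_CSH: "csh_min n \<in> CSH n"
  unfolding CSH_def
proof (intro CollectI conjI allI impI ballI)
  fix i j k
  assume "n < i \<or> n < j \<or> n < k"
  then show "csh_min n i j k = 0" by (auto simp: csh_min_def)
next
  fix i j
  assume ij: "i \<le> n" "j \<le> n"
  have zero: "csh_min n a b 0 = 0" if "a \<le> n" "b \<le> n" for a b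
    using that csh_min_piecewise[of a n b 0] by (auto simp: max_def)
  have top: "csh_min n a b n = int (a * b)" if "a \<le> n" "b \<le> n" for a b
  proof -
    have "int a * int b \<le> int n * int b" "int a * int b \<le> int a * int n"
      using that by (simp_all add: mult_right_mono mult_left_mono)
    then show ?thesis
      using that by (simp add: csh_min_def algebra_simps power2_eq_square min_def)
  qed
  show "csh_min n i j 0 = 0" "csh_min n i 0 j = 0" "csh_min n 0 i j = 0"
    using zero[OF ij] csh_min_swap12[of n 0 i j] csh_min_swap23[of n i 0 j] csh_min_swap23[of n 0 i j]
    by simp_all
  show "csh_min n i j n = int (i * j)" "csh_min n i n j = int (i * j)" "csh_min n n i j = int (i * j)"
    using top[OF ij] csh_min_swap12[of n n i j] csh_min_swap23[of n i n j] csh_min_swap23[of n n i j]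
    by simp_all
  fix k
  assume k: "k \<in> {1..n}"
  show "step_ok n i j (csh_min n i j k - csh_min n i j (k - 1))"
    using ij k by (rule csh_min_increment)
  show "step_ok n i j (csh_min n i k j - csh_min n i (k - 1) j)"
    using csh_min_increment[OF ij k] by (simp add: csh_min_swap23[of n i _ j])
  show "step_ok n i j (csh_min n k i j - csh_min n (k - 1) i j)"
    using csh_min_increment[OF ij k] by (simp add: csh_min_swap12[of n _ i] csh_min_swap23[of n i _ j])
qed

lemma CSH_bounds:
  assumes C: "C \<in> CSH n" and ijk: "i \<le> n" "j \<le> n" "k \<le> n"
  shows "0 \<le> C i j k \<and> C i j k \<le> csh_min n i j k"
proof -
  have kline: "int (b - a) * max 0 (int i + int j - int n) \<le> C i j b - C i j a \<and> C i j b - C i j a \<le> int (b - a) * int (min i j)"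
    if "a \<le> b" "b \<le> n" for a b
    using step_ok_sum_bounds[where n = n and g = "\<lambda>t. C i j t" and p = i and q = j, OF _ that] CSH_steps[OF C ijk(1,2)]
    by blast
  have iline: "C i j k - C 0 j k \<le> int i * int (min j k)"
    using step_ok_sum_bounds[where n = n and g = "\<lambda>t. C t j k" and p = j and q = k and a = 0 and b = i]
      CSH_steps[OF C ijk(2,3)] ijk
    by simp
  have faces: "C i j 0 = 0" "C 0 j k = 0" "C i j n = int (i * j)"
    using CSH_zero_faces[OF C] CSH_top_faces[OF C] ijk by auto
  have "int k * max 0 (int i + int j - int n) \<le> C i j k"
    using kline[of 0 k] faces ijk by simp
  moreover have "0 \<le> int k * max 0 (int i + int j - int n)"
    by simp
  ultimately have lower: "0 \<le> C i j k"
    by linarith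
  have "C i j k \<le> int k * int (min i j)" "C i j k \<le> int i * int (min j k)"
    using kline[of 0 k] iline faces ijk by simp_all
  moreover have "int (n - k) * (int i + int j - int n) \<le> int (n - k) * max 0 (int i + int j - int n)"
    by (simp add: mult_left_mono)
  moreover have "int (n - k) * max 0 (int i + int j - int n) \<le> C i j n - C i j k"
    using kline[of k n] ijk by simp
  moreover have "int i * int j - int (n - k) * (int i + int j - int n)
     = int i * int j + int j * int k + int k * int i - int n * (int i + int j + int k) + int n ^ 2"
    using ijk by (simp add: of_nat_diff algebra_simps power2_eq_square)
  moreover have "int k * int (min i j) \<le> int k * int i" "int i * int (min j k) \<le> int i * int j"
    by (simp_all add: mult_left_mono)
  moreover have "int k * int (min i j) \<le> int j * int k"
    by (metis min.cobounded2 mult.commute mult_left_mono of_nat_0_le_iff of_nat_mono)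
  ultimately show ?thesis
    using lower faces ijk unfolding csh_min_def by simp
qed

lemma csh_le_csh_min: "C \<in> CSH n \<Longrightarrow> csh_le n (csh_min n) C"
  unfolding csh_le_def using CSH_bounds by blast

lemma finite_CSH: "finite (CSH n)"
proof -
  define box where "box = {0..n} \<times> {0..n} \<times> {0..n}"
  define F where "F = {f :: nat \<times> nat \<times> nat \<Rightarrow> int.
    \<forall>x. (x \<in> box \<longrightarrow> f x \<in> {0..int (n * n)}) \<and> (x \<notin> box \<longrightarrow> f x = 0)}"
  define uncurry3 where "uncurry3 f i j k = f (i, j, k)" for f :: "nat \<times> nat \<times> nat \<Rightarrow> int" and i j k
  have "CSH n \<subseteq> uncurry3 ` F"
  proof
    fix C
    assume C: "C \<in> CSH n"
    have "C i j k \<le> int (n * n)" if "i \<le> n" "j \<le> n" "k \<le> n" for i j k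
    proof -
      have "int i * int j \<le> int n * int n" using that by (simp add: mult_mono)
      then show ?thesis using CSH_bounds[OF C that] by (simp add: csh_min_def that)
    qed
    then have "(\<lambda>(i, j, k). C i j k) \<in> F"
      unfolding F_def box_def using CSH_bounds[OF C] CSH_outside[OF C] by auto
    moreover have "C = uncurry3 (\<lambda>(i, j, k). C i j k)"
      by (intro ext) (simp add: uncurry3_def)
    ultimately show "C \<in> uncurry3 ` F" by blast
  qed
  moreover have "finite F"
    unfolding F_def box_def by (intro finite_set_of_finite_funs) auto
  ultimately show ?thesis
    by (meson finite_imageI finite_subset)
qed

section \<open>Covering steps\<close>

definition bump :: "hmat \<Rightarrow> nat \<Rightarrow> nat \<Rightarrow> nat \<Rightarrow> hmat" where
  "bump X a b c i j k = X i j k + (if i = a \<and> j = b \<and> k = c then 1 else 0)"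

(* Along a line the weight n x_t - ij t changes by n (x_t - x_(t-1)) - ij, so minimality of the
   weight at the bumped position m excludes an extreme increment on either side of m. *)
lemma step_ok_bump_line:
  fixes x y :: "nat \<Rightarrow> int"
  assumes x_step: "step_ok n i j (x t - x (t - 1))" and y_step: "step_ok n i j (y t - y (t - 1))"
    and le: "x (t - 1) \<le> y (t - 1)" "x t \<le> y t" and t: "1 \<le> t"
    and on_line: "P \<Longrightarrow> x m < y m \<and> i \<in> {1..<n} \<and> j \<in> {1..<n} \<and>
      (\<forall>s\<in>{t - 1, t}. x s < y s \<longrightarrow> int n * x m - int (i * j * m) \<le> int n * x s - int (i * j * s))"
  shows "step_ok n i j ((x t + (if P \<and> t = m then 1 else 0)) - (x (t - 1) + (if P \<and> t - 1 = m then 1 else 0)))"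
proof -
  define lo where "lo = max 0 (int i + int j - int n)"
  have x_bounds: "lo \<le> x t - x (t - 1)" "x t - x (t - 1) \<le> int (min i j)"
    and y_bounds: "lo \<le> y t - y (t - 1)" "y t - y (t - 1) \<le> int (min i j)"
    using x_step y_step unfolding step_ok_def lo_def by auto
  have weight_step: "int (i * j * t) - int (i * j * (t - 1)) = int i * int j"
    using t by (simp add: of_nat_diff algebra_simps)
  consider "P" "t = m" | "P" "t - 1 = m" | "\<not> (P \<and> t = m)" "\<not> (P \<and> t - 1 = m)"
    by blast
  then show ?thesis
  proof cases
    case 1
    with on_line have i: "1 \<le> i" "i < n" and j: "1 \<le> j" "j < n"
      and "x t < y t" "x (t - 1) < y (t - 1) \<Longrightarrow> int n * (x t - x (t - 1)) \<le> int i * int j"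
      using t weight_step by (auto simp: algebra_simps)
    moreover have "int i * int j < int n * int (min i j)"
      using i j by (cases "i \<le> j") (simp_all add: mult_strict_left_mono mult_strict_right_mono)
    ultimately have "x t - x (t - 1) < int (min i j)"
      using x_bounds y_bounds by (smt (verit) mult_left_mono of_nat_0_le_iff)
    then show ?thesis
      using 1 t x_bounds unfolding step_ok_def lo_def by auto
  next
    case 2
    with on_line have i: "1 \<le> i" "i < n" and j: "1 \<le> j" "j < n"
      and "x (t - 1) < y (t - 1)" "x t < y t \<Longrightarrow> int i * int j \<le> int n * (x t - x (t - 1))"
      using t weight_step by (auto simp: algebra_simps)
    moreover have "int n * lo < int i * int j"
      using i j mult_pos_pos[of "int n - int i" "int n - int j"]
      by (auto simp: lo_def max_def algebra_simps)
    ultimately have "lo < x t - x (t - 1)"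
      using x_bounds y_bounds by (smt (verit) mult_left_mono of_nat_0_le_iff)
    then show ?thesis
      using 2 t x_bounds unfolding step_ok_def lo_def by auto
  next
    case 3
    then show ?thesis
      using x_step by (simp only: if_False add_0_right)
  qed
qed

lemma bump_CSH:
  assumes C: "C \<in> CSH n" and D: "D \<in> CSH n" and le: "csh_le n D C"
    and abc: "a \<le> n" "b \<le> n" "c \<le> n" "C a b c < D a b c"
    and least: "\<And>i j k. i \<le> n \<Longrightarrow> j \<le> n \<Longrightarrow> k \<le> n \<Longrightarrow> C i j k < D i j k \<Longrightarrow>
      int n * C a b c - int (a * b * c) \<le> int n * C i j k - int (i * j * k)"
  shows "bump C a b c \<in> CSH n"
  unfolding CSH_def
proof (intro CollectI conjI allI impI ballI)
  have interior: "a \<in> {1..<n}" "b \<in> {1..<n}" "c \<in> {1..<n}"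
    using CSH_differ_interior[OF C D abc(1-3)] abc(4) by auto
  have C_le_D: "C i j k \<le> D i j k" if "i \<le> n" "j \<le> n" "k \<le> n" for i j k
    using le that unfolding csh_le_def by auto
  {
    fix i j k
    assume "n < i \<or> n < j \<or> n < k"
    then show "bump C a b c i j k = 0"
      using CSH_outside[OF C] interior by (auto simp: bump_def)
  }
  fix i j
  assume ij: "i \<le> n" "j \<le> n"
  show "bump C a b c i j 0 = 0" "bump C a b c i 0 j = 0" "bump C a b c 0 i j = 0"
    using CSH_zero_faces[OF C ij] interior by (auto simp: bump_def)
  show "bump C a b c i j n = int (i * j)" "bump C a b c i n j = int (i * j)" "bump C a b c n i j = int (i * j)"
    using CSH_top_faces[OF C ij] interior by (auto simp: bump_def)
  fix k
  assume k: "k \<in> {1..n}"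
  note steps = CSH_steps[OF C ij k] CSH_steps[OF D ij k]
  have "step_ok n i j ((C i j k + (if (i = a \<and> j = b) \<and> k = c then 1 else 0))
      - (C i j (k - 1) + (if (i = a \<and> j = b) \<and> k - 1 = c then 1 else 0)))"
    by (rule step_ok_bump_line[where y = "D i j"])
      (use steps ij k C_le_D abc interior least[of a b k] least[of a b "k - 1"] in auto)
  then show "step_ok n i j (bump C a b c i j k - bump C a b c i j (k - 1))"
    by (simp add: bump_def conj_ac)
  have "step_ok n i j ((C i k j + (if (i = a \<and> j = c) \<and> k = b then 1 else 0))
      - (C i (k - 1) j + (if (i = a \<and> j = c) \<and> k - 1 = b then 1 else 0)))"
    by (rule step_ok_bump_line[where x = "\<lambda>t. C i t j" and y = "\<lambda>t. D i t j"])
      (use steps ij k C_le_D abc interior least[of a k c] least[of a "k - 1" c] in \<open>auto simp: mult_ac\<close>)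
  then show "step_ok n i j (bump C a b c i k j - bump C a b c i (k - 1) j)"
    by (simp add: bump_def conj_ac)
  have "step_ok n i j ((C k i j + (if (i = b \<and> j = c) \<and> k = a then 1 else 0))
      - (C (k - 1) i j + (if (i = b \<and> j = c) \<and> k - 1 = a then 1 else 0)))"
    by (rule step_ok_bump_line[where x = "\<lambda>t. C t i j" and y = "\<lambda>t. D t i j"])
      (use steps ij k C_le_D abc interior least[of k b c] least[of "k - 1" b c] in \<open>auto simp: mult_ac\<close>)
  then show "step_ok n i j (bump C a b c k i j - bump C a b c (k - 1) i j)"
    by (simp add: bump_def conj_ac)
qed

lemma exists_bump_between:
  assumes C: "C \<in> CSH n" and D: "D \<in> CSH n" and le: "csh_le n D C" and ne: "C \<noteq> D"
  obtains a b c where "bump C a b c \<in> CSH n" "csh_le n D (bump C a b c)"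
    "a \<in> {1..<n}" "b \<in> {1..<n}" "c \<in> {1..<n}"
proof -
  define X where "X = {(i, j, k). i \<le> n \<and> j \<le> n \<and> k \<le> n \<and> C i j k < D i j k}"
  define w where "w = (\<lambda>(i, j, k). int n * C i j k - int (i * j * k))"
  have fin: "finite X"
    by (rule finite_subset[of _ "{0..n} \<times> {0..n} \<times> {0..n}"]) (auto simp: X_def)
  obtain i j k where "i \<le> n" "j \<le> n" "k \<le> n" "C i j k \<noteq> D i j k"
    using ne CSH_eqI[OF C D] by blast
  moreover have "C i j k \<le> D i j k"
    using le \<open>i \<le> n\<close> \<open>j \<le> n\<close> \<open>k \<le> n\<close> unfolding csh_le_def by blast
  ultimately have "(i, j, k) \<in> X"
    unfolding X_def by simp
  then have "X \<noteq> {}"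
    by blast
  then obtain p where "p \<in> X" and p_least: "\<And>q. q \<in> X \<Longrightarrow> w p \<le> w q"
    using arg_min_if_finite[OF fin, of w] by (metis not_le)
  then obtain a b c where abc: "a \<le> n" "b \<le> n" "c \<le> n" "C a b c < D a b c" and p: "p = (a, b, c)"
    unfolding X_def by auto
  have "bump C a b c \<in> CSH n"
    using C D le abc by (rule bump_CSH) (use p_least in \<open>auto simp: X_def w_def p\<close>)
  moreover have "csh_le n D (bump C a b c)"
    using le abc unfolding csh_le_def bump_def by auto
  moreover have "a \<in> {1..<n}" "b \<in> {1..<n}" "c \<in> {1..<n}"
    using CSH_differ_interior[OF C D abc(1-3)] abc(4) by auto
  ultimately show ?thesis
    using that by blast
qed

section \<open>Length of maximal chains\<close>

definition interior_sum :: "nat \<Rightarrow> hmat \<Rightarrow> int" where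
  "interior_sum n X = (\<Sum>i\<in>{1..<n}. \<Sum>j\<in>{1..<n}. \<Sum>k\<in>{1..<n}. X i j k)"

lemma interior_sum_cartesian:
  "interior_sum n X = (\<Sum>(i, j, k)\<in>{1..<n} \<times> {1..<n} \<times> {1..<n}. X i j k)"
  unfolding interior_sum_def by (simp add: sum.cartesian_product)

lemma interior_sum_mono: "csh_le n C D \<Longrightarrow> interior_sum n D \<le> interior_sum n C"
  unfolding interior_sum_def csh_le_def by (intro sum_mono) auto

lemma interior_sum_strict_mono:
  assumes C: "C \<in> CSH n" and D: "D \<in> CSH n" and le: "csh_le n C D" and ne: "C \<noteq> D"
  shows "interior_sum n D < interior_sum n C"
proof -
  obtain i j k where ijk: "i \<le> n" "j \<le> n" "k \<le> n" "C i j k \<noteq> D i j k"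
    using ne CSH_eqI[OF C D] by blast
  have "D i j k < C i j k"
    using le ijk unfolding csh_le_def by force
  moreover have "(i, j, k) \<in> {1..<n} \<times> {1..<n} \<times> {1..<n}"
    using CSH_differ_interior[OF C D ijk] by simp
  ultimately show ?thesis
    unfolding interior_sum_cartesian using le unfolding csh_le_def
    by (intro sum_strict_mono_ex1 bexI[where x = "(i, j, k)"]) auto
qed

lemma interior_sum_bump:
  assumes "a \<in> {1..<n}" "b \<in> {1..<n}" "c \<in> {1..<n}"
  shows "interior_sum n (bump X a b c) = interior_sum n X + 1"
proof -
  have "interior_sum n (bump X a b c) = interior_sum n X
      + (\<Sum>q\<in>{1..<n} \<times> {1..<n} \<times> {1..<n}. if q = (a, b, c) then 1 else 0)"
    unfolding interior_sum_cartesian bump_def by (simp add: sum.distrib case_prod_beta' prod_eq_iff)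
  then show ?thesis
    using assms by simp
qed

lemma chain_csh_le_if_interior_sum_le:
  assumes "is_chain n S" "S \<subseteq> CSH n" "x \<in> S" "w \<in> S" "interior_sum n w \<le> interior_sum n x"
  shows "csh_le n x w"
  using assms interior_sum_strict_mono[of w n x] csh_le_refl[of n x]
  unfolding is_chain_def by (metis not_le subsetD)

lemma is_chain_insert_between:
  assumes chain: "is_chain n S" "S \<subseteq> CSH n" and xy: "x \<in> S" "y \<in> S"
    and z: "csh_le n z x" "csh_le n y z"
    and gap: "\<forall>w\<in>S. interior_sum n w \<le> interior_sum n x \<or> interior_sum n y \<le> interior_sum n w"
  shows "is_chain n (insert z S)"
proof -
  have "csh_le n z w \<or> csh_le n w z" if "w \<in> S" for w
    using gap chain_csh_le_if_interior_sum_le[OF chain xy(1) that] chain_csh_le_if_interior_sum_le[OF chain that xy(2)]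
      csh_le_trans[OF z(1)] csh_le_trans[OF _ z(2)] that
    by blast
  then show ?thesis
    using chain(1) csh_le_refl unfolding is_chain_def by blast
qed

lemma maximal_chain_toD:
  assumes "maximal_chain_to n C S"
  shows "S \<subseteq> CSH n" "is_chain n S" "\<And>x. x \<in> S \<Longrightarrow> csh_le n x C"
  using assms unfolding maximal_chain_to_def Let_def by blast+

lemma maximal_chain_insert:
  assumes "maximal_chain_to n C S" "z \<in> CSH n" "csh_le n z C" "is_chain n (insert z S)"
  shows "z \<in> S"
proof (rule ccontr)
  assume "z \<notin> S"
  then have "S \<subset> insert z S"
    by blast
  moreover have "insert z S \<subseteq> {D \<in> CSH n. csh_le n D C}"
    using assms maximal_chain_toD[OF assms(1)] by blast
  ultimately show False
    using assms(1,4) unfolding maximal_chain_to_def Let_def by blast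
qed

lemma maximal_chain_ends:
  assumes C: "C \<in> CSH n" and S: "maximal_chain_to n C S"
  shows "csh_min n \<in> S" "C \<in> S"
proof -
  note chain = maximal_chain_toD[OF S]
  show "csh_min n \<in> S"
  proof (rule maximal_chain_insert[OF S csh_min_CSH])
    show "csh_le n (csh_min n) C"
      using C by (rule csh_le_csh_min)
    show "is_chain n (insert (csh_min n) S)"
      using chain csh_le_csh_min csh_le_refl unfolding is_chain_def by blast
  qed
  show "C \<in> S"
  proof (rule maximal_chain_insert[OF S C csh_le_refl])
    show "is_chain n (insert C S)"
      using chain csh_le_refl unfolding is_chain_def by blast
  qed
qed

lemma maximal_chain_consecutive:
  assumes S: "maximal_chain_to n C S" and xy: "x \<in> S" "y \<in> S" "interior_sum n x < interior_sum n y"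
    and gap: "\<forall>w\<in>S. interior_sum n w \<le> interior_sum n x \<or> interior_sum n y \<le> interior_sum n w"
  shows "interior_sum n y = interior_sum n x + 1"
proof (rule ccontr)
  assume jump: "interior_sum n y \<noteq> interior_sum n x + 1"
  note chain = maximal_chain_toD[OF S]
  have "csh_le n y x"
    using chain_csh_le_if_interior_sum_le[OF chain(2,1) xy(2,1)] xy(3) by simp
  moreover have "x \<in> CSH n" "y \<in> CSH n" "x \<noteq> y"
    using xy chain(1) by auto
  ultimately obtain a b c where z: "bump x a b c \<in> CSH n" "csh_le n y (bump x a b c)"
    and abc: "a \<in> {1..<n}" "b \<in> {1..<n}" "c \<in> {1..<n}"
    using exists_bump_between by metis
  have zx: "csh_le n (bump x a b c) x"
    unfolding csh_le_def bump_def by simp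
  have "is_chain n (insert (bump x a b c) S)"
    using is_chain_insert_between[OF chain(2,1) xy(1,2) zx z(2) gap] .
  then have "bump x a b c \<in> S"
    using maximal_chain_insert[OF S z(1)] csh_le_trans[OF zx chain(3)[OF xy(1)]] by blast
  moreover have "interior_sum n (bump x a b c) = interior_sum n x + 1"
    using abc by (rule interior_sum_bump)
  ultimately show False
    using gap jump xy(3) by fastforce
qed

lemma maximal_chain_interior_sum_image:
  assumes C: "C \<in> CSH n" and S: "maximal_chain_to n C S"
  shows "interior_sum n ` S = {interior_sum n C..interior_sum n (csh_min n)}"
proof (rule int_set_eq_interval)
  note chain = maximal_chain_toD[OF S]
  show "finite (interior_sum n ` S)"
    using finite_subset[OF chain(1) finite_CSH] by (rule finite_imageI)
  show "interior_sum n C \<in> interior_sum n ` S" "interior_sum n (csh_min n) \<in> interior_sum n ` S"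
    using maximal_chain_ends[OF C S] by simp_all
  show "interior_sum n ` S \<subseteq> {interior_sum n C..interior_sum n (csh_min n)}"
  proof (rule image_subsetI, rule atLeastAtMost_iff[THEN iffD2])
    fix x
    assume "x \<in> S"
    moreover from this have "x \<in> CSH n"
      using chain(1) by blast
    ultimately show "interior_sum n C \<le> interior_sum n x \<and> interior_sum n x \<le> interior_sum n (csh_min n)"
      using interior_sum_mono[OF chain(3)] interior_sum_mono[OF csh_le_csh_min] by simp
  qed
  fix a b
  assume "a \<in> interior_sum n ` S" "b \<in> interior_sum n ` S" "a < b"
    and gap: "\<forall>t\<in>interior_sum n ` S. t \<le> a \<or> b \<le> t"
  then show "b = a + 1"
    using maximal_chain_consecutive[OF S] by blast
qed

lemma maximal_chain_card:
  assumes C: "C \<in> CSH n" and S: "maximal_chain_to n C S"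
  shows "int (card S) = interior_sum n (csh_min n) - interior_sum n C + 1"
proof -
  note chain = maximal_chain_toD[OF S]
  have "inj_on (interior_sum n) S"
  proof (rule inj_onI)
    fix x y
    assume "x \<in> S" "y \<in> S" "interior_sum n x = interior_sum n y"
    then show "x = y"
      using chain_csh_le_if_interior_sum_le[OF chain(2,1)] chain(1) csh_le_antisym
      by (metis order_refl subsetD)
  qed
  then have "card S = card {interior_sum n C..interior_sum n (csh_min n)}"
    using card_image maximal_chain_interior_sum_image[OF C S] by metis
  moreover have "interior_sum n C \<le> interior_sum n (csh_min n)"
    using C by (intro interior_sum_mono csh_le_csh_min)
  ultimately show ?thesis
    by simp
qed

section \<open>The moments L_ij\<close>

lemma Xi_inv_moment:
  assumes C: "C \<in> CSH n" and ij: "i \<in> {1..n}" "j \<in> {1..n}"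
  shows "(\<Sum>k\<in>{1..n}. int k * Xi_inv C i j k)
    = int n - (\<Sum>k\<in>{1..<n}. C i j k - C (i - 1) j k - C i (j - 1) k + C (i - 1) (j - 1) k)"
proof -
  define B where "B k = C i j k - C (i - 1) j k - C i (j - 1) k + C (i - 1) (j - 1) k" for k
  have idx: "i \<le> n" "j \<le> n" "i - 1 \<le> n" "j - 1 \<le> n" "int (i - 1) = int i - 1" "int (j - 1) = int j - 1"
    using ij by auto
  have "Xi_inv C i j k = B k - B (k - 1)" for k
    unfolding Xi_inv_def B_def by (simp add: algebra_simps)
  then have "(\<Sum>k\<in>{1..n}. int k * Xi_inv C i j k) = int n * B n - (\<Sum>k<n. B k)"
    by (simp only: sum_index_mult_diff[where h = B])
  moreover have "B n = 1"
    using CSH_top_faces[OF C] idx by (simp add: B_def algebra_simps)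
  moreover have "B 0 = 0"
    using CSH_zero_faces[OF C] idx by (simp add: B_def)
  ultimately show ?thesis
    by (simp add: sum_lessThan_eq_Ico_1 B_def)
qed

lemma sum_sq_diff_Xi_inv_moment:
  assumes C: "C \<in> CSH n"
  shows "6 * (\<Sum>i\<in>{1..n}. \<Sum>j\<in>{1..n}. (int i - int j)^2 * (int n - (\<Sum>k\<in>{1..n}. int k * Xi_inv C i j k)))
     = int n ^ 2 * (int n - 1) ^ 2 * (2 * int n - 1) - 12 * interior_sum n C"
proof -
  define B where "B i j k = C i j k - C (i - 1) j k - C i (j - 1) k + C (i - 1) (j - 1) k" for i j k
  define Sq where "Sq = (\<Sum>i\<in>{1..n}. int i ^ 2)"
  have slice: "(\<Sum>i\<in>{1..n}. \<Sum>j\<in>{1..n}. (int i - int j)^2 * B i j k)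
      = 2 * int k * Sq - 2 * int n ^ 2 * int k - 2 * (\<Sum>i\<in>{1..<n}. \<Sum>j\<in>{1..<n}. C i j k)"
    if "k \<in> {1..<n}" for k
    unfolding B_def Sq_def
    by (rule sum_sq_diff_mixed_diff) (use CSH_zero_faces[OF C] CSH_top_faces[OF C] that in auto)
  have "(\<Sum>i\<in>{1..n}. \<Sum>j\<in>{1..n}. (int i - int j)^2 * (int n - (\<Sum>k\<in>{1..n}. int k * Xi_inv C i j k)))
      = (\<Sum>i\<in>{1..n}. \<Sum>j\<in>{1..n}. \<Sum>k\<in>{1..<n}. (int i - int j)^2 * B i j k)"
  proof (intro sum.cong refl)
    fix i j
    assume ij: "i \<in> {1..n}" "j \<in> {1..n}"
    show "(int i - int j)^2 * (int n - (\<Sum>k\<in>{1..n}. int k * Xi_inv C i j k))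
        = (\<Sum>k\<in>{1..<n}. (int i - int j)^2 * B i j k)"
      unfolding Xi_inv_moment[OF C ij] by (simp add: B_def sum_distrib_left)
  qed
  also have "\<dots> = (\<Sum>i\<in>{1..n}. \<Sum>k\<in>{1..<n}. \<Sum>j\<in>{1..n}. (int i - int j)^2 * B i j k)"
    by (rule sum.cong[OF refl], rule sum.swap)
  also have "\<dots> = (\<Sum>k\<in>{1..<n}. \<Sum>i\<in>{1..n}. \<Sum>j\<in>{1..n}. (int i - int j)^2 * B i j k)"
    by (rule sum.swap)
  also have "\<dots> = (\<Sum>k\<in>{1..<n}. (2 * Sq - 2 * int n ^ 2) * int k - 2 * (\<Sum>i\<in>{1..<n}. \<Sum>j\<in>{1..<n}. C i j k))"
  proof (rule sum.cong[OF refl])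
    fix k
    assume "k \<in> {1..<n}"
    then show "(\<Sum>i\<in>{1..n}. \<Sum>j\<in>{1..n}. (int i - int j)^2 * B i j k)
        = (2 * Sq - 2 * int n ^ 2) * int k - 2 * (\<Sum>i\<in>{1..<n}. \<Sum>j\<in>{1..<n}. C i j k)"
      unfolding slice[OF \<open>k \<in> {1..<n}\<close>] by (simp add: algebra_simps)
  qed
  also have "\<dots> = (2 * Sq - 2 * int n ^ 2) * (\<Sum>k\<in>{1..<n}. int k) - 2 * interior_sum n C"
    unfolding interior_sum_cartesian sum_subtractf sum_distrib_left[symmetric]
    by (simp add: sum.cartesian_product) (rule sum.reindex_bij_witness[of _ "\<lambda>(i, j, k). (k, i, j)" "\<lambda>(k, i, j). (i, j, k)"]; auto)
  finally show ?thesis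
    using six_sum_squares_int[of n] double_sum_Ico_1_int[of n] unfolding Sq_def[symmetric]
    by algebra
qed

section \<open>The potential of the minimum element\<close>

definition antidiag_sum :: "(nat \<Rightarrow> nat \<Rightarrow> int) \<Rightarrow> nat \<Rightarrow> int" where
  "antidiag_sum g s = (\<Sum>p\<in>{0..s}. g p (s - p))"

lemma antidiag_sum_add_2:
  "antidiag_sum g (s + 2) = g 0 (s + 2) + g (s + 2) 0 + (\<Sum>p\<in>{0..s}. g (Suc p) (Suc (s - p)))"
proof -
  have "antidiag_sum g (Suc (Suc s)) = g 0 (s + 2) + (\<Sum>p\<in>{0..Suc s}. g (Suc p) (Suc s - p))"
    unfolding antidiag_sum_def by (subst sum.atLeast0_atMost_Suc_shift) simp
  also have "(\<Sum>p\<in>{0..Suc s}. g (Suc p) (Suc s - p)) = (\<Sum>p\<in>{0..s}. g (Suc p) (Suc (s - p))) + g (s + 2) 0"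
    by (simp add: sum.atLeast0_atMost_Suc Suc_diff_le)
  finally show ?thesis
    by simp
qed

lemma sum_triangle_antidiag: "(\<Sum>p\<in>{0..n}. \<Sum>r<n - p. g p r) = (\<Sum>s<n. antidiag_sum g s)"
proof (induction n)
  case (Suc n)
  have "(\<Sum>p\<in>{0..Suc n}. \<Sum>r<Suc n - p. g p r) = (\<Sum>p\<in>{0..n}. (\<Sum>r<n - p. g p r) + g p (n - p))"
    by (simp add: Suc_diff_le)
  then show ?case
    using Suc.IH by (simp add: sum.distrib antidiag_sum_def)
qed simp

definition psi :: "nat \<Rightarrow> nat \<Rightarrow> int" where
  "psi p r = int p * int r * (int (max p r) - 1)"

lemma antidiag_prod_closed: "6 * antidiag_sum (\<lambda>p r. int p * int r) s = (int s - 1) * int s * (int s + 1)"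
proof (induction s rule: nat_induct2)
  case (step s)
  have "(\<Sum>p\<in>{0..s}. int (Suc p) * int (Suc (s - p))) = (\<Sum>p\<in>{0..s}. int p * int (s - p) + (int s + 1))"
    by (rule sum.cong) (auto simp: of_nat_diff algebra_simps)
  then have "antidiag_sum (\<lambda>p r. int p * int r) (s + 2) = antidiag_sum (\<lambda>p r. int p * int r) s + (int s + 1) ^ 2"
    unfolding antidiag_sum_add_2 by (simp add: antidiag_sum_def sum.distrib power2_eq_square)
  then show ?case
    using step by (simp add: algebra_simps power2_eq_square)
qed (simp_all add: antidiag_sum_def)

lemma antidiag_max_closed: "8 * antidiag_sum (\<lambda>p r. int (max p r)) s = 1 + 8 * int s + 6 * int s ^ 2 - (-1) ^ s"
proof (induction s rule: nat_induct2)
  case (step s)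
  have "(\<Sum>p\<in>{0..s}. int (max (Suc p) (Suc (s - p)))) = (\<Sum>p\<in>{0..s}. int (max p (s - p)) + 1)"
    by (rule sum.cong) auto
  then have "antidiag_sum (\<lambda>p r. int (max p r)) (s + 2) = antidiag_sum (\<lambda>p r. int (max p r)) s + 3 * int s + 5"
    unfolding antidiag_sum_add_2 by (simp add: antidiag_sum_def sum.distrib)
  then show ?case
    using step by (simp add: algebra_simps power2_eq_square)
qed (simp_all add: antidiag_sum_def)

lemma antidiag_psi_closed:
  "192 * antidiag_sum psi s = 3 + 32 * int s - 34 * int s ^ 2 - 32 * int s ^ 3 + 22 * int s ^ 4
     + (-1) ^ s * (- 3 - 6 * int s ^ 2)"
proof (induction s rule: nat_induct2)
  case (step s)
  have "(\<Sum>p\<in>{0..s}. psi (Suc p) (Suc (s - p)))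
      = (\<Sum>p\<in>{0..s}. psi p (s - p) + int p * int (s - p) + (int s + 1) * int (max p (s - p)))"
    by (rule sum.cong) (auto simp: psi_def max_def of_nat_diff algebra_simps)
  then have rec: "antidiag_sum psi (s + 2) = antidiag_sum psi s + antidiag_sum (\<lambda>p r. int p * int r) s
      + (int s + 1) * antidiag_sum (\<lambda>p r. int (max p r)) s"
    unfolding antidiag_sum_add_2 by (simp add: antidiag_sum_def sum.distrib sum_distrib_left psi_def)
  define e :: int where "e = (-1) ^ s"
  have shift: "int (s + 2) = int s + 2" "(-1::int) ^ (s + 2) = e"
    by (simp_all add: e_def)
  show ?case
    using rec step antidiag_prod_closed[of s] antidiag_max_closed[of s]
    unfolding shift e_def[symmetric] by algebra
qed (simp_all add: antidiag_sum_def psi_def)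

lemma sum_antidiag_psi_closed:
  "1920 * (\<Sum>s<n. antidiag_sum psi s) = -15 - 194 * int n + 250 * int n ^ 2 + 120 * int n ^ 3
     - 190 * int n ^ 4 + 44 * int n ^ 5 + (-1) ^ n * (15 - 30 * int n + 30 * int n ^ 2)"
proof (induction n)
  case (Suc n)
  define e :: int where "e = (-1) ^ n"
  have shift: "(\<Sum>s<Suc n. antidiag_sum psi s) = (\<Sum>s<n. antidiag_sum psi s) + antidiag_sum psi n"
    "int (Suc n) = int n + 1" "(-1::int) ^ Suc n = - e"
    by (simp_all add: e_def)
  show ?case
    using Suc.IH antidiag_psi_closed[of n] unfolding shift e_def[symmetric] by algebra
qed simp

lemma csh_min_line_sum:
  assumes i: "i \<in> {1..<n}" and j: "j \<in> {1..<n}"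
  shows "2 * (\<Sum>k\<in>{1..<n}. csh_min n i j k) = int n * (int n - 1) * int (min i j) - psi (min i j) (n - max i j)"
proof -
  define p where "p = min i j"
  define r where "r = n - max i j"
  define U where "U = max p r"
  define c where "c = n - U"
  have pr: "1 \<le> p" "1 \<le> r" "p + r \<le> n" "1 \<le> U" "U < n"
    using i j unfolding p_def r_def U_def by (auto simp: min_def max_def)
  have shift: "int k + int U - int n = int k - int c" for k
    using pr by (simp add: c_def of_nat_diff)
  have line: "csh_min n i j k = int p * int k - int (min p r) * max 0 (int k - int c)" if "k \<in> {1..<n}" for k
    using csh_min_piecewise[of i n j k] i j that
    unfolding p_def[symmetric] r_def[symmetric] U_def[symmetric] shift by (simp add: mult.commute)
  have "(\<Sum>k\<in>{1..<n}. csh_min n i j k) = (\<Sum>k\<in>{1..<n}. int p * int k - int (min p r) * max 0 (int k - int c))"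
    by (intro sum.cong refl) (rule line)
  then have "2 * (\<Sum>k\<in>{1..<n}. csh_min n i j k)
      = int p * (2 * (\<Sum>k\<in>{1..<n}. int k)) - int (min p r) * (2 * (\<Sum>k\<in>{1..<n}. max 0 (int k - int c)))"
    unfolding sum_subtractf sum_distrib_left[symmetric] by (simp only: mult.left_commute right_diff_distrib)
  also have "2 * (\<Sum>k\<in>{1..<n}. max 0 (int k - int c)) = (int U - 1) * int U"
    using sum_ramp[of c "n - 1"] pr unfolding c_def by (simp add: atLeastLessThanSuc_atLeastAtMost[symmetric] of_nat_diff)
  also have "int p * (2 * (\<Sum>k\<in>{1..<n}. int k)) - int (min p r) * ((int U - 1) * int U)
      = int n * (int n - 1) * int p - (int (min p r) * int U) * (int U - 1)"
    unfolding double_sum_Ico_1_int by (simp add: algebra_simps)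
  also have "int (min p r) * int U = int p * int r"
    unfolding U_def by (simp add: min_def max_def mult.commute)
  finally show ?thesis
    unfolding psi_def p_def r_def U_def .
qed

lemma sum_psi_min_max:
  "(\<Sum>i\<in>{1..<n}. \<Sum>j\<in>{1..<n}. psi (min i j) (n - max i j))
    = antidiag_sum psi n + 2 * (\<Sum>s<n. antidiag_sum psi s)"
proof -
  define d where "d i j = psi (min i j) (n - max i j)" for i j
  have d_edge: "d i 0 = 0" "d 0 i = 0" "d i n = 0" "d n i = 0" if "i \<le> n" for i
    using that by (auto simp: d_def psi_def max_def)
  have reindex: "(\<Sum>q\<in>{Suc p..n}. d p q) = (\<Sum>r<n - p. psi p r)" for p
    by (rule sum.reindex_bij_witness[of _ "\<lambda>r. n - r" "\<lambda>q. n - q"]) (auto simp: d_def)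
  have "(\<Sum>i\<in>{1..<n}. \<Sum>j\<in>{1..<n}. d i j) = (\<Sum>i\<in>{1..<n}. \<Sum>j\<in>{0..n}. d i j)"
    by (intro sum.cong refl sum_Icc_0_eq_Ico_1[symmetric]) (simp_all add: d_edge)
  also have "\<dots> = (\<Sum>i\<in>{0..n}. \<Sum>j\<in>{0..n}. d i j)"
    by (rule sum_Icc_0_eq_Ico_1[symmetric]) (simp_all add: d_edge)
  also have "\<dots> = (\<Sum>p\<in>{0..n}. d p p) + 2 * (\<Sum>p\<in>{0..n}. \<Sum>q\<in>{Suc p..n}. d p q)"
    by (rule sum_square_symmetric) (simp add: d_def min.commute max.commute)
  also have "(\<Sum>p\<in>{0..n}. d p p) = antidiag_sum psi n"
    by (simp add: d_def antidiag_sum_def)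
  also have "(\<Sum>p\<in>{0..n}. \<Sum>q\<in>{Suc p..n}. d p q) = (\<Sum>s<n. antidiag_sum psi s)"
    by (simp only: reindex sum_triangle_antidiag)
  finally show ?thesis
    by (simp add: d_def)
qed

lemma interior_sum_csh_min:
  "480 * interior_sum n (csh_min n) = - 11 * int n ^ 5 + 20 * int n ^ 4 + 10 * int n ^ 3 - 20 * int n ^ 2
     + (if even n then 16 else 1) * int n + 40 * int n ^ 2 * (int n - 1) ^ 2 * (2 * int n - 1)"
proof -
  define c :: int where "c = (if even n then 16 else 1)"
  define e :: int where "e = (-1) ^ n"
  have "2 * interior_sum n (csh_min n) = (\<Sum>i\<in>{1..<n}. \<Sum>j\<in>{1..<n}. 2 * (\<Sum>k\<in>{1..<n}. csh_min n i j k))"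
    unfolding interior_sum_def by (simp add: sum_distrib_left)
  also have "\<dots> = (\<Sum>i\<in>{1..<n}. \<Sum>j\<in>{1..<n}. int n * (int n - 1) * int (min i j) - psi (min i j) (n - max i j))"
    by (simp only: csh_min_line_sum cong: sum.cong)
  also have "\<dots> = int n * (int n - 1) * (\<Sum>i\<in>{1..<n}. \<Sum>j\<in>{1..<n}. int (min i j))
      - (antidiag_sum psi n + 2 * (\<Sum>s<n. antidiag_sum psi s))"
    unfolding sum_psi_min_max[symmetric] by (simp only: sum_subtractf sum_distrib_left)
  finally have "2 * interior_sum n (csh_min n) = int n * (int n - 1) * (\<Sum>i\<in>{1..<n}. \<Sum>j\<in>{1..<n}. int (min i j))
      - (antidiag_sum psi n + 2 * (\<Sum>s<n. antidiag_sum psi s))" .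
  moreover have "6 * (\<Sum>i\<in>{1..<n}. \<Sum>j\<in>{1..<n}. int (min i j)) = (int n - 1) * int n * (2 * int n - 1)"
    using sum_min_square[of n] by (simp add: sum_lessThan_eq_Ico_1)
  moreover have "2 * c = 17 + 15 * e"
    by (simp add: c_def e_def)
  ultimately show ?thesis
    using antidiag_psi_closed[of n] sum_antidiag_psi_closed[of n]
    unfolding c_def[symmetric] e_def[symmetric] by algebra
qed

theorem mainTheorem12:
  fixes n :: nat and C :: hmat and S :: "hmat set"
  assumes "C \<in> CSH n"
    and "maximal_chain_to n C S"
  shows "real (card S) - 1 =
     (- 11 * real n ^ 5 + 20 * real n ^ 4 + 10 * real n ^ 3 - 20 * real n ^ 2
        + (4::real) powi (1 + (-1::int) ^ n) * real n) / 480
     + 1/2 * (\<Sum>i\<in>{1..n}. \<Sum>j\<in>{1..n}.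
          (real i - real j) ^ 2 *
          (real n - real_of_int (\<Sum>k\<in>{1..n}. int k * Xi_inv C i j k)))"
proof -
  define Z where "Z = (\<Sum>i\<in>{1..n}. \<Sum>j\<in>{1..n}.
    (int i - int j) ^ 2 * (int n - (\<Sum>k\<in>{1..n}. int k * Xi_inv C i j k)))"
  define c :: int where "c = (if even n then 16 else 1)"
  have key: "480 * (int (card S) - 1)
      = - 11 * int n ^ 5 + 20 * int n ^ 4 + 10 * int n ^ 3 - 20 * int n ^ 2 + c * int n + 240 * Z"
    using maximal_chain_card[OF assms] interior_sum_csh_min[of n] sum_sq_diff_Xi_inv_moment[OF assms(1)]
    unfolding Z_def[symmetric] c_def[symmetric] by algebra
  have "480 * (real (card S) - 1)
      = - 11 * real n ^ 5 + 20 * real n ^ 4 + 10 * real n ^ 3 - 20 * real n ^ 2 + c * real n + 240 * Z"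
    using arg_cong[OF key, of real_of_int] by simp
  moreover have "(4::real) powi (1 + (-1::int) ^ n) = real_of_int c"
    by (simp add: c_def power_int_def)
  moreover have "(\<Sum>i\<in>{1..n}. \<Sum>j\<in>{1..n}. (real i - real j) ^ 2 *
      (real n - real_of_int (\<Sum>k\<in>{1..n}. int k * Xi_inv C i j k))) = real_of_int Z"
    by (simp add: Z_def)
  ultimately show ?thesis
    by (simp add: field_simps)
qed

end
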